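(* Consider problem (P) and suppose Assumptions A and B hold. Let $\{(x^t,L_g^t)\}$ be generated by SCP$_{ls}$. Then: (i) $\{x^t\}$ is bounded; (ii) the sequence $\{\bar F(x^{t+1},x^t,L_g^t)\}$ is nonincreasing and converges to some real number $\bar F^*$, and for all $t\ge1$, $\bar F(x^{t+1},x^t,L_g^t)\le\bar F(x^t,x^{t-1},L_g^{t-1})-\frac c2\|x^{t+1}-x^t\|^2$; (iii) $\lim_{t\to\infty}\|x^{t+1}-x^t\|=0$.
   Context: Problem (P): $\min_{x\in\mathbb R^n}F(x):=f(x)+P_1(x)-P_2(x)+\delta_{\{g\le 0\}}(x)$, where $f:\mathbb R^n\to\mathbb R$ is continuously differentiable, $P_1,P_2:\mathbb R^n\to\mathbb R$ are convex and continuous, $g=(g_1,\dots,g_m):\mathbb R^n\to\mathbb R^m$ is continuous with $\{x:g(x)\le0\}\neq\emptyset$ (componentwise inequalities), $\delta_C$ the indicator function of $C$. Assumption A: (i) $\nabla f$ is Lipschitz with modulus $L_f$; (ii) each $g_i$ is differentiable with $\nabla g_i$ Lipschitz with modulus $L_{g_i}$; (iii) $F$ is level-bounded. Assumption B (MFCQ): each $g_i$ is continuously differentiable and for every $x$ with $g(x)\le0$ there is $d$ with $\langle\nabla g_i(x),d\rangle<0$ for all $i\in I(x):=\{j:g_j(x)=0\}$. $\bar G(x,y,w)\in\mathbb R^m$ ($x,y\in\mathbb R^n,w\in\mathbb R^m$) has components $\bar G_i(x,y,w)=g_i(y)+\langle\nabla g_i(y),x-y\rangle+\frac{w_i}{2}\|x-y\|^2$,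 and $\bar F(x,y,w):=f(x)+P_1(x)-P_2(x)+\delta_{\{\bar G\le0\}}(x,y,w)$. Algorithm SCP$_{ls}$: fix $c>0$, $0<\underline L<\bar L$, $\tau>1$ and $x^0$ with $g(x^0)\le0$. For $t=0,1,2,\dots$: (1) pick any $\xi^t\in\partial P_2(x^t)$; (2) choose $L_f^{t,0}\in[\underline L,\bar L]$, $L_g^{t,0}\in[\underline L,\bar L]^m$ arbitrarily, set $\tilde L_f=L_f^{t,0}$, $\tilde L_g=L_g^{t,0}$; (3) compute $\tilde x$ solving: minimize $\langle\nabla f(x^t)-\xi^t,x-x^t\rangle+\frac{\tilde L_f}{2}\|x-x^t\|^2+P_1(x)$ subject to $\bar G(x,x^t,\tilde L_g)\le0$. If $g(\tilde x)\le0$ and $F(\tilde x)\le F(x^t)-\frac c2\|\tilde x-x^t\|^2$, set $x^{t+1}=\tilde x$, $L_f^t=\tilde L_f$, $L_g^t=\tilde L_g$ and go to iteration $t+1$; otherwise, if $g(\tilde x)\not\le0$ replace $\tilde L_g$ by $\tau\tilde L_g$, while if $g(\tilde x)\le0$ but the decrease inequality fails replace $\tilde L_f$ by $\tau\tilde L_f$, and repeat step (3). (Under Assumptions A and B this algorithm is well defined and produces infinite sequences.) *)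

theory Defs
  imports "HOL-Analysis.Analysis"
begin

definition csubdiff :: "('a::real_inner \<Rightarrow> real) \<Rightarrow> 'a \<Rightarrow> 'a set" where
  "csubdiff P x = {\<xi>. \<forall>y. P y \<ge> P x + inner \<xi> (y - x)}"

definition feasible :: "('m::finite \<Rightarrow> 'a \<Rightarrow> real) \<Rightarrow> 'a \<Rightarrow> bool" where
  "feasible g x \<longleftrightarrow> (\<forall>i. g i x \<le> 0)"

definition Fobj :: "('a \<Rightarrow> real) \<Rightarrow> ('a \<Rightarrow> real) \<Rightarrow> ('a \<Rightarrow> real) \<Rightarrow> ('m::finite \<Rightarrow> 'a \<Rightarrow> real) \<Rightarrow> 'a \<Rightarrow> ereal" where
  "Fobj f P1 P2 g x = (if feasible g x then ereal (f x + P1 x - P2 x) else \<infinity>)"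

text \<open>Components of Gbar(x,y,w); gg i is the gradient of g i.\<close>
definition Gbar :: "('m::finite \<Rightarrow> 'a::real_inner \<Rightarrow> real) \<Rightarrow> ('m \<Rightarrow> 'a \<Rightarrow> 'a) \<Rightarrow> 'a \<Rightarrow> 'a \<Rightarrow> ('m \<Rightarrow> real) \<Rightarrow> 'm \<Rightarrow> real" where
  "Gbar g gg x y w i = g i y + inner (gg i y) (x - y) + w i / 2 * (norm (x - y))\<^sup>2"

definition Fbar :: "('a \<Rightarrow> real) \<Rightarrow> ('a \<Rightarrow> real) \<Rightarrow> ('a \<Rightarrow> real) \<Rightarrow> ('m::finite \<Rightarrow> 'a::real_inner \<Rightarrow> real) \<Rightarrow> ('m \<Rightarrow> 'a \<Rightarrow> 'a) \<Rightarrow> 'a \<Rightarrow> 'a \<Rightarrow> ('m \<Rightarrow> real) \<Rightarrow> ereal" where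
  "Fbar f P1 P2 g gg x y w = (if (\<forall>i. Gbar g gg x y w i \<le> 0) then ereal (f x + P1 x - P2 x) else \<infinity>)"

text \<open>xt' solves the SCP subproblem at the iterate xt with subgradient \<xi> and parameters Lf, Lg
  (gf is the gradient of f).\<close>
definition subprob_sol :: "('a::real_inner \<Rightarrow> 'a) \<Rightarrow> ('a \<Rightarrow> real) \<Rightarrow> ('m::finite \<Rightarrow> 'a \<Rightarrow> real) \<Rightarrow> ('m \<Rightarrow> 'a \<Rightarrow> 'a)
      \<Rightarrow> 'a \<Rightarrow> 'a \<Rightarrow> real \<Rightarrow> ('m \<Rightarrow> real) \<Rightarrow> 'a \<Rightarrow> bool" where
  "subprob_sol gf P1 g gg xt \<xi> Lf Lg z \<longleftrightarrow>
     (let S = {x. \<forall>i. Gbar g gg x xt Lg i \<le> 0};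
          Q = (\<lambda>x. inner (gf xt - \<xi>) (x - xt) + Lf / 2 * (norm (x - xt))\<^sup>2 + P1 x)
      in z \<in> S \<and> (\<forall>y\<in>S. Q z \<le> Q y))"

text \<open>Line search of SCP_ls at iterate xt: starting from trial parameters (Lf, Lg), the
  (finitely many) repetitions of step (3) end by accepting the point xnew with final
  parameters (Lf', Lg').\<close>
inductive ls_accept :: "('a::real_inner \<Rightarrow> real) \<Rightarrow> ('a \<Rightarrow> 'a) \<Rightarrow> ('a \<Rightarrow> real) \<Rightarrow> ('a \<Rightarrow> real)
      \<Rightarrow> ('m::finite \<Rightarrow> 'a \<Rightarrow> real) \<Rightarrow> ('m \<Rightarrow> 'a \<Rightarrow> 'a) \<Rightarrow> real \<Rightarrow> real
      \<Rightarrow> 'a \<Rightarrow> 'a \<Rightarrow> real \<Rightarrow> ('m \<Rightarrow> real) \<Rightarrow> real \<Rightarrow> ('m \<Rightarrow> real) \<Rightarrow> 'a \<Rightarrow> bool"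
  for f gf P1 P2 g gg c \<tau> xt \<xi> where
  accept: "subprob_sol gf P1 g gg xt \<xi> Lf Lg z \<Longrightarrow> feasible g z \<Longrightarrow>
     Fobj f P1 P2 g z \<le> Fobj f P1 P2 g xt - ereal (c / 2 * (norm (z - xt))\<^sup>2) \<Longrightarrow>
     ls_accept f gf P1 P2 g gg c \<tau> xt \<xi> Lf Lg Lf Lg z"
| reject_g: "subprob_sol gf P1 g gg xt \<xi> Lf Lg z \<Longrightarrow> \<not> feasible g z \<Longrightarrow>
     ls_accept f gf P1 P2 g gg c \<tau> xt \<xi> Lf (\<lambda>i. \<tau> * Lg i) Lf' Lg' xnew \<Longrightarrow>
     ls_accept f gf P1 P2 g gg c \<tau> xt \<xi> Lf Lg Lf' Lg' xnew"
| reject_f: "subprob_sol gf P1 g gg xt \<xi> Lf Lg z \<Longrightarrow> feasible g z \<Longrightarrow>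
     \<not> (Fobj f P1 P2 g z \<le> Fobj f P1 P2 g xt - ereal (c / 2 * (norm (z - xt))\<^sup>2)) \<Longrightarrow>
     ls_accept f gf P1 P2 g gg c \<tau> xt \<xi> (\<tau> * Lf) Lg Lf' Lg' xnew \<Longrightarrow>
     ls_accept f gf P1 P2 g gg c \<tau> xt \<xi> Lf Lg Lf' Lg' xnew"

definition SCP_ls_seq :: "('a::real_inner \<Rightarrow> real) \<Rightarrow> ('a \<Rightarrow> 'a) \<Rightarrow> ('a \<Rightarrow> real) \<Rightarrow> ('a \<Rightarrow> real)
      \<Rightarrow> ('m::finite \<Rightarrow> 'a \<Rightarrow> real) \<Rightarrow> ('m \<Rightarrow> 'a \<Rightarrow> 'a) \<Rightarrow> real \<Rightarrow> real \<Rightarrow> real \<Rightarrow> real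
      \<Rightarrow> (nat \<Rightarrow> 'a) \<Rightarrow> (nat \<Rightarrow> 'a) \<Rightarrow> (nat \<Rightarrow> real) \<Rightarrow> (nat \<Rightarrow> 'm \<Rightarrow> real)
      \<Rightarrow> (nat \<Rightarrow> real) \<Rightarrow> (nat \<Rightarrow> 'm \<Rightarrow> real) \<Rightarrow> bool" where
  "SCP_ls_seq f gf P1 P2 g gg c Llo Lhi \<tau> x \<xi> Lf0 Lg0 Lf Lg \<longleftrightarrow>
     feasible g (x 0) \<and>
     (\<forall>t. \<xi> t \<in> csubdiff P2 (x t) \<and>
          Llo \<le> Lf0 t \<and> Lf0 t \<le> Lhi \<and> (\<forall>i. Llo \<le> Lg0 t i \<and> Lg0 t i \<le> Lhi) \<and>
          ls_accept f gf P1 P2 g gg c \<tau> (x t) (\<xi> t) (Lf0 t) (Lg0 t) (Lf t) (Lg t) (x (Suc t)))"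

end

theory Submission
  imports Defs
begin

text \<open>Write h = f + P1 - P2. The line search accepts only feasible points with
  h(x(t+1)) \<le> h(x t) - c/2 \<parallel>x(t+1) - x t\<parallel>^2, and x(t+1) is feasible for the subproblem at
  x t, so Fbar(x(t+1), x t, Lg t) = h(x(t+1)). Hence h(x t) decreases and the iterates stay in a
  level set of F, which is bounded; h, being continuous, is bounded there, so h(x t) converges and
  the decrements, which dominate c/2 \<parallel>x(t+1) - x t\<parallel>^2, tend to zero.\<close>

lemma bounded_continuous_image:
  fixes h :: "'a::heine_borel \<Rightarrow> 'b::metric_space"
  assumes "continuous_on UNIV h" and "bounded S"
  shows "bounded (h ` S)"
proof -
  have "compact (h ` closure S)"
    using assms by (intro compact_continuous_image)
      (auto simp: compact_closure intro: continuous_on_subset)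
  then show ?thesis
    by (rule compact_imp_bounded[THEN bounded_subset]) (auto intro: closure_subset[THEN subsetD])
qed

lemma sufficient_decrease_decseq:
  fixes a d :: "nat \<Rightarrow> real"
  assumes "c \<ge> 0" and "\<And>t. a (Suc t) \<le> a t - c * (d t)\<^sup>2"
  shows "decseq a"
proof (rule decseq_SucI)
  fix t
  have "0 \<le> c * (d t)\<^sup>2" using \<open>c \<ge> 0\<close> by simp
  then show "a (Suc t) \<le> a t" using assms(2)[of t] by linarith
qed

lemma sufficient_decrease_tendsto_zero:
  fixes a d :: "nat \<Rightarrow> real"
  assumes "c > 0" and step: "\<And>t. a (Suc t) \<le> a t - c * (d t)\<^sup>2" and "a \<longlonglongrightarrow> L"
  shows "d \<longlonglongrightarrow> 0"
proof -
  have gap_lim: "(\<lambda>t. a t - a (Suc t)) \<longlonglongrightarrow> 0"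
    using tendsto_diff[OF \<open>a \<longlonglongrightarrow> L\<close> LIMSEQ_Suc[OF \<open>a \<longlonglongrightarrow> L\<close>]] by simp
  have "0 \<le> c * (d t)\<^sup>2" and "c * (d t)\<^sup>2 \<le> a t - a (Suc t)" for t
    using \<open>c > 0\<close> step[of t] by simp_all
  then have "(\<lambda>t. c * (d t)\<^sup>2) \<longlonglongrightarrow> 0"
    by (intro tendsto_sandwich[OF always_eventually always_eventually tendsto_const gap_lim]) auto
  then have "(\<lambda>t. (d t) ^ 2) \<longlonglongrightarrow> 0"
    using tendsto_mult_left_iff[of c "\<lambda>t. (d t)\<^sup>2" 0] \<open>c > 0\<close> by simp
  then show ?thesis
    using power_tendsto_0_iff[of 2 d] by simp
qed

lemma ls_accept_accepted:
  assumes "ls_accept f gf P1 P2 g gg c \<tau> xt \<xi> Lf Lg Lf' Lg' xnew"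
  shows "subprob_sol gf P1 g gg xt \<xi> Lf' Lg' xnew" and "feasible g xnew"
    and "Fobj f P1 P2 g xnew \<le> Fobj f P1 P2 g xt - ereal (c / 2 * (norm (xnew - xt))\<^sup>2)"
  using assms by (induction rule: ls_accept.induct) auto

context
  fixes f P1 P2 :: "'a::real_inner \<Rightarrow> real" and gf :: "'a \<Rightarrow> 'a"
    and g :: "'m::finite \<Rightarrow> 'a \<Rightarrow> real" and gg :: "'m \<Rightarrow> 'a \<Rightarrow> 'a"
    and c Llo Lhi \<tau> :: real and x \<xi> :: "nat \<Rightarrow> 'a"
    and Lf Lf0 :: "nat \<Rightarrow> real" and Lg Lg0 :: "nat \<Rightarrow> 'm \<Rightarrow> real"
  assumes gen: "SCP_ls_seq f gf P1 P2 g gg c Llo Lhi \<tau> x \<xi> Lf0 Lg0 Lf Lg"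
begin

lemma SCP_ls_seq_accept:
  "ls_accept f gf P1 P2 g gg c \<tau> (x t) (\<xi> t) (Lf0 t) (Lg0 t) (Lf t) (Lg t) (x (Suc t))"
  using gen unfolding SCP_ls_seq_def by blast

lemma SCP_ls_seq_feasible: "feasible g (x t)"
proof (cases t)
  case 0
  then show ?thesis using gen by (simp add: SCP_ls_seq_def)
next
  case (Suc s)
  then show ?thesis using ls_accept_accepted(2)[OF SCP_ls_seq_accept] by simp
qed

lemma SCP_ls_seq_Fobj: "Fobj f P1 P2 g (x t) = ereal (f (x t) + P1 (x t) - P2 (x t))"
  using SCP_ls_seq_feasible by (simp add: Fobj_def)

lemma SCP_ls_seq_decrease:
  "f (x (Suc t)) + P1 (x (Suc t)) - P2 (x (Suc t))
     \<le> f (x t) + P1 (x t) - P2 (x t) - c / 2 * (norm (x (Suc t) - x t))\<^sup>2"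
  using ls_accept_accepted(3)[OF SCP_ls_seq_accept, of t] by (simp add: SCP_ls_seq_Fobj)

lemma SCP_ls_seq_Fbar:
  "Fbar f P1 P2 g gg (x (Suc t)) (x t) (Lg t)
     = ereal (f (x (Suc t)) + P1 (x (Suc t)) - P2 (x (Suc t)))"
  using ls_accept_accepted(1)[OF SCP_ls_seq_accept, of t]
  by (simp add: Fbar_def subprob_sol_def Let_def)

lemma SCP_ls_seq_bounded:
  assumes "c \<ge> 0" and level_bounded: "\<And>\<alpha>::real. bounded {y. Fobj f P1 P2 g y \<le> ereal \<alpha>}"
  shows "bounded (range x)"
proof -
  define h where "h t = f (x t) + P1 (x t) - P2 (x t)" for t
  have "decseq h"
  proof (rule sufficient_decrease_decseq)
    show "0 \<le> c / 2" using \<open>c \<ge> 0\<close> by simp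
    show "h (Suc t) \<le> h t - c / 2 * (norm (x (Suc t) - x t))\<^sup>2" for t
      unfolding h_def by (rule SCP_ls_seq_decrease)
  qed
  then have "Fobj f P1 P2 g (x t) \<le> ereal (h 0)" for t
    by (simp add: SCP_ls_seq_Fobj h_def[symmetric] decseq_def)
  then have "range x \<subseteq> {y. Fobj f P1 P2 g y \<le> ereal (h 0)}"
    by blast
  then show ?thesis
    using level_bounded bounded_subset by blast
qed

end

theorem mainTheorem2:
  fixes f P1 P2 :: "'a::euclidean_space \<Rightarrow> real"
    and gf :: "'a \<Rightarrow> 'a"
    and g :: "'m::finite \<Rightarrow> 'a \<Rightarrow> real"
    and gg :: "'m \<Rightarrow> 'a \<Rightarrow> 'a"
    and c Llo Lhi \<tau> L_f :: real
    and L_g :: "'m \<Rightarrow> real"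
    and x \<xi> :: "nat \<Rightarrow> 'a"
    and Lf Lf0 :: "nat \<Rightarrow> real"
    and Lg Lg0 :: "nat \<Rightarrow> 'm \<Rightarrow> real"
  assumes grad_f: "\<And>y. GDERIV f y :> gf y"
    and P1_convex: "convex_on UNIV P1" and P1_cont: "continuous_on UNIV P1"
    and P2_convex: "convex_on UNIV P2" and P2_cont: "continuous_on UNIV P2"
    and g_cont: "\<And>i. continuous_on UNIV (g i)"
    and feas_nonempty: "\<exists>y. feasible g y"
    \<comment> \<open>Assumption A\<close>
    and A1: "L_f-lipschitz_on UNIV gf"
    and A2_grad: "\<And>i y. GDERIV (g i) y :> gg i y"
    and A2_lip: "\<And>i. (L_g i)-lipschitz_on UNIV (gg i)"
    and A3: "\<And>\<alpha>::real. bounded {y. Fobj f P1 P2 g y \<le> ereal \<alpha>}"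
    \<comment> \<open>Assumption B (MFCQ)\<close>
    and B_C1: "\<And>i. continuous_on UNIV (gg i)"
    and B_MFCQ: "\<And>y. feasible g y \<Longrightarrow> \<exists>d. \<forall>i. g i y = 0 \<longrightarrow> inner (gg i y) d < 0"
    \<comment> \<open>parameters of SCP_ls\<close>
    and c_pos: "c > 0" and L_pos: "0 < Llo" and L_lt: "Llo < Lhi" and tau_gt: "\<tau> > 1"
    and gen: "SCP_ls_seq f gf P1 P2 g gg c Llo Lhi \<tau> x \<xi> Lf0 Lg0 Lf Lg"
  shows "bounded (range x)
    \<and> decseq (\<lambda>t. Fbar f P1 P2 g gg (x (Suc t)) (x t) (Lg t))
    \<and> (\<exists>Fstar::real. (\<lambda>t. Fbar f P1 P2 g gg (x (Suc t)) (x t) (Lg t)) \<longlonglongrightarrow> ereal Fstar)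
    \<and> (\<forall>t\<ge>1. Fbar f P1 P2 g gg (x (Suc t)) (x t) (Lg t)
               \<le> Fbar f P1 P2 g gg (x t) (x (t - 1)) (Lg (t - 1)) - ereal (c / 2 * (norm (x (Suc t) - x t))\<^sup>2))
    \<and> (\<lambda>t. norm (x (Suc t) - x t)) \<longlonglongrightarrow> 0"
proof -
  define h where "h y = f y + P1 y - P2 y" for y
  define d where "d t = norm (x (Suc t) - x t)" for t
  have step: "h (x (Suc t)) \<le> h (x t) - c / 2 * (d t)\<^sup>2" for t
    using SCP_ls_seq_decrease[OF gen] by (simp add: h_def d_def)
  have Fbar_eq: "Fbar f P1 P2 g gg (x (Suc t)) (x t) (Lg t) = ereal (h (x (Suc t)))" for t
    using SCP_ls_seq_Fbar[OF gen] by (simp add: h_def)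
  have bounded_x: "bounded (range x)"
    using SCP_ls_seq_bounded[OF gen] c_pos A3 by simp
  have dec: "decseq (h \<circ> x)"
    using c_pos step by (intro sufficient_decrease_decseq[where c = "c / 2" and d = d]) auto
  have "continuous_on UNIV h"
    unfolding h_def using grad_f P1_cont P2_cont
    by (intro continuous_intros)
      (auto intro: continuous_at_imp_continuous_on has_derivative_continuous simp: gderiv_def)
  then have "bounded (range (h \<circ> x))"
    using bounded_continuous_image[OF _ bounded_x] by (simp add: image_comp)
  then obtain L where hL: "(h \<circ> x) \<longlonglongrightarrow> L"
    using dec by (metis Bseq_eq_bounded Bseq_monoseq_convergent convergent_def decseq_imp_monoseq)
  have "d \<longlonglongrightarrow> 0"
    using c_pos step hL by (intro sufficient_decrease_tendsto_zero[where c = "c / 2"]) auto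
  moreover have "(\<lambda>t. Fbar f P1 P2 g gg (x (Suc t)) (x t) (Lg t)) \<longlonglongrightarrow> ereal L"
    unfolding Fbar_eq using LIMSEQ_Suc[OF hL] by (simp add: tendsto_ereal)
  moreover have "decseq (\<lambda>t. Fbar f P1 P2 g gg (x (Suc t)) (x t) (Lg t))"
    using dec unfolding Fbar_eq by (simp add: decseq_def)
  moreover have "Fbar f P1 P2 g gg (x (Suc t)) (x t) (Lg t)
      \<le> Fbar f P1 P2 g gg (x t) (x (t - 1)) (Lg (t - 1)) - ereal (c / 2 * (d t)\<^sup>2)"
    if "t \<ge> 1" for t
    using step[of t] that by (cases t) (simp_all add: Fbar_eq)
  ultimately show ?thesis
    using bounded_x unfolding d_def by blast
qed

end
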